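(* Let $T$ be the BFS tree produced by temporal BFS on a temporal graph $G=(V,E)$ from source $s$ with starting time $t_s$. For every vertex $v\in V$, any two distinct occurrences of $v$ in $T$ have distinct levels.
   Context: A temporal graph is a pair $G=(V,E)$ where $V$ is a finite set of vertices and $E$ is a finite set of temporal edges, i.e. triples $(u,v,t)$ with $u,v\in V$, $u\neq v$, $t\in\mathbb{R}$ (the time at which the edge is active); distinct elements of $E$ are distinct triples. Fix $t_s\in\mathbb{R}$ and $s\in V$. Temporal BFS. Records are tuples $(x,d,\tau,p)$ (vertex $x$, level $d$, time $\tau$, predecessor record $p$ or none); every record ever created is an occurrence (node) of the BFS tree $T$, rooted at the initial record, with a tree edge from the predecessor record to the record; the level and time of an occurrence are the final values of its fields. For each $x\in V$ a current value $\sigma(x)$ is kept, initially $\infty$, and set to $\tau$ whenever a record of $x$ is created or its time is updated to $\tau$. Initially the FIFO queue $Q$ contains only $(s,0,t_s,\text{none})$ and $\sigma(s)=t_s$; no edge is traversed. While $Q\neq\emptyset$: pop the front record $R=(u,d_u,\sigma_u,p_u)$; let $B$ be the set of edges $(u,v,t)\in E$ not yet traversed with $\sigma_u\le t$; for each vertex $v$ such that $B$ contains an edge to $v$ (in any order), let $e=(u,v,t)$ be the edge of $B$ to $v$ with smallest $t$, mark $e$ traversed, and: (i) if $Q$ contains no record of $v$ and $\sigma(v)>t$, create $(v,d_u+1,t,R)$ and append it to $Q$; (ii) if $Q$ contains a record of $v$ with level $d_u+1$ and $\sigma(v)>t$, set that record's time to $t$ and predecessor to $R$; (iii) if $Q$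 contains a record of $v$ but none with level $d_u+1$, and $\sigma(v)>t$, create $(v,d_u+1,t,R)$ and append it to $Q$. *)

theory Defs
  imports Main "HOL-Library.Extended_Real"
begin

text \<open>Records are identified by their creation index (position in the list of all records ever
  created); the predecessor field stores the index of the predecessor record.\<close>

type_synonym 'v tedge = "'v \<times> 'v \<times> real"

record 'v trec =
  rv    :: 'v
  rlev  :: nat
  rtime :: real
  rpred :: "nat option"

text \<open>State of the temporal BFS.
  recs  : all records ever created (the nodes of the BFS tree T, with current field values);
  queue : the FIFO queue Q (indices into recs);
  sig   : the current value sigma(x), infinity initially;
  trav  : the set of traversed edges;
  cur   : during the processing of a popped record R: Some (R, W, B) where B is the edge set
          computed at the pop and W the set of target vertices still to be processed.\<close>

record 'v bfs_state =
  recs  :: "'v trec list"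
  queue :: "nat list"
  sig   :: "'v \<Rightarrow> ereal"
  trav  :: "'v tedge set"
  cur   :: "(nat \<times> 'v set \<times> 'v tedge set) option"

definition bfs_init :: "'v \<Rightarrow> real \<Rightarrow> 'v bfs_state" where
  "bfs_init s ts = \<lparr> recs = [\<lparr> rv = s, rlev = 0, rtime = ts, rpred = None \<rparr>],
                    queue = [0], sig = (\<lambda>_. \<infinity>)(s := ereal ts), trav = {}, cur = None \<rparr>"

text \<open>Small steps of the temporal BFS. The order in which the target vertices of B are
  processed is arbitrary (nondeterministic).\<close>

inductive bfs_step :: "'v tedge set \<Rightarrow> 'v bfs_state \<Rightarrow> 'v bfs_state \<Rightarrow> bool" for E where
  pop: "\<lbrakk> cur S = None; queue S = r # q;
          B = {(u, v, t) \<in> E. (u, v, t) \<notin> trav S \<and> u = rv (recs S ! r) \<and> rtime (recs S ! r) \<le> t} \<rbrakk>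
        \<Longrightarrow> bfs_step E S (S\<lparr> queue := q, cur := Some (r, {v. \<exists>u t. (u, v, t) \<in> B}, B) \<rparr>)"
| finish: "cur S = Some (r, {}, B) \<Longrightarrow> bfs_step E S (S\<lparr> cur := None \<rparr>)"
| create: "\<lbrakk> cur S = Some (r, W, B); v \<in> W; (u, v, t) \<in> B;
             \<forall>u' t'. (u', v, t') \<in> B \<longrightarrow> t \<le> t';
             (\<not> (\<exists>i \<in> set (queue S). rv (recs S ! i) = v))
               \<or> ((\<exists>i \<in> set (queue S). rv (recs S ! i) = v)
                   \<and> \<not> (\<exists>i \<in> set (queue S). rv (recs S ! i) = v \<and> rlev (recs S ! i) = rlev (recs S ! r) + 1));
             sig S v > ereal t \<rbrakk>
        \<Longrightarrow> bfs_step E S (S\<lparr> recs := recs S @ [\<lparr> rv = v, rlev = rlev (recs S ! r) + 1, rtime = t, rpred = Some r \<rparr>],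
                            queue := queue S @ [length (recs S)],
                            sig := (sig S)(v := ereal t),
                            trav := insert (u, v, t) (trav S),
                            cur := Some (r, W - {v}, B) \<rparr>)"
| update: "\<lbrakk> cur S = Some (r, W, B); v \<in> W; (u, v, t) \<in> B;
             \<forall>u' t'. (u', v, t') \<in> B \<longrightarrow> t \<le> t';
             i \<in> set (queue S); rv (recs S ! i) = v; rlev (recs S ! i) = rlev (recs S ! r) + 1;
             sig S v > ereal t \<rbrakk>
        \<Longrightarrow> bfs_step E S (S\<lparr> recs := (recs S)[i := (recs S ! i)\<lparr> rtime := t, rpred := Some r \<rparr>],
                            sig := (sig S)(v := ereal t),
                            trav := insert (u, v, t) (trav S),
                            cur := Some (r, W - {v}, B) \<rparr>)"
| skip: "\<lbrakk> cur S = Some (r, W, B); v \<in> W; (u, v, t) \<in> B;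
           \<forall>u' t'. (u', v, t') \<in> B \<longrightarrow> t \<le> t';
           \<not> (sig S v > ereal t) \<rbrakk>
        \<Longrightarrow> bfs_step E S (S\<lparr> trav := insert (u, v, t) (trav S), cur := Some (r, W - {v}, B) \<rparr>)"

end

theory Submission
  imports Defs
begin

text \<open>While a record of level \<open>d\<close> is processed, the queue has the usual BFS shape: its levels
  are sorted and lie in \<open>{d, d + 1}\<close>, and every record already dequeued has level at most \<open>d\<close>.
  A newly created record of \<open>v\<close> has level \<open>d + 1\<close>, so it cannot share its level with a dequeued
  record of \<open>v\<close>, and the creation rule itself excludes a queued record of \<open>v\<close> at that level.
  Hence the pairs (vertex, level) of all records stay distinct at every reachable state.\<close>

definition fifo_levels :: "nat list \<Rightarrow> nat list \<Rightarrow> nat \<Rightarrow> bool" where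
  "fifo_levels ls q d \<longleftrightarrow>
     set q \<subseteq> {..<length ls} \<and> sorted (map ((!) ls) q) \<and>
     (\<forall>k<length ls. k \<notin> set q \<longrightarrow> ls ! k \<le> d) \<and>
     (\<forall>j\<in>set q. d \<le> ls ! j \<and> ls ! j \<le> d + 1)"

lemma fifo_levels_pop:
  assumes "fifo_levels ls (r # q) d"
  shows "fifo_levels ls q (ls ! r)"
proof -
  from assms have "d \<le> ls ! r" and "\<forall>j\<in>set q. ls ! r \<le> ls ! j"
    by (simp_all add: fifo_levels_def)
  with assms show ?thesis
    by (fastforce simp: fifo_levels_def)
qed

lemma fifo_levels_enqueue:
  assumes "fifo_levels ls q d"
  shows "fifo_levels (ls @ [d + 1]) (q @ [length ls]) d"
proof -
  from assms have q_valid: "set q \<subseteq> {..<length ls}"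
    by (simp add: fifo_levels_def)
  then have map_old: "map ((!) (ls @ [d + 1])) q = map ((!) ls) q"
    by (auto simp: nth_append)
  have "sorted (map ((!) (ls @ [d + 1])) (q @ [length ls]))"
    using assms unfolding map_append map_old by (auto simp: fifo_levels_def sorted_append)
  with assms q_valid show ?thesis
    by (auto simp: fifo_levels_def nth_append less_Suc_eq)
qed

definition bfs_inv :: "'v bfs_state \<Rightarrow> bool" where
  "bfs_inv S \<longleftrightarrow>
     distinct (map (\<lambda>x. (rv x, rlev x)) (recs S)) \<and>
     (case cur S of
        None \<Rightarrow> \<exists>d. fifo_levels (map rlev (recs S)) (queue S) d
      | Some (r, _) \<Rightarrow> r < length (recs S) \<and>
          fifo_levels (map rlev (recs S)) (queue S) (rlev (recs S ! r)))"

lemma bfs_inv_init: "bfs_inv (bfs_init s ts)"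
  unfolding bfs_inv_def fifo_levels_def bfs_init_def by (auto intro: exI[of _ 0])

lemma map_update_time_pred:
  assumes "\<And>x. f (x\<lparr>rtime := t, rpred := p\<rparr>) = f x"
  shows "map f (xs[i := (xs ! i)\<lparr>rtime := t, rpred := p\<rparr>]) = map f xs"
proof (cases "i < length xs")
  case True
  then have "map f (xs[i := (xs ! i)\<lparr>rtime := t, rpred := p\<rparr>]) = (map f xs)[i := map f xs ! i]"
    by (simp add: map_update assms)
  then show ?thesis
    by simp
qed (simp add: list_update_beyond)

lemma create_level_fresh:
  assumes "fifo_levels (map rlev (recs S)) (queue S) (rlev (recs S ! r))"
    and "\<not> (\<exists>i \<in> set (queue S). rv (recs S ! i) = v \<and> rlev (recs S ! i) = rlev (recs S ! r) + 1)"
  shows "(v, rlev (recs S ! r) + 1) \<notin> set (map (\<lambda>x. (rv x, rlev x)) (recs S))"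
proof
  assume "(v, rlev (recs S ! r) + 1) \<in> set (map (\<lambda>x. (rv x, rlev x)) (recs S))"
  then obtain k where k: "k < length (recs S)" "rv (recs S ! k) = v"
    "rlev (recs S ! k) = rlev (recs S ! r) + 1"
    by (auto simp: in_set_conv_nth)
  have "k \<notin> set (queue S)"
    using assms(2) k by blast
  then have "rlev (recs S ! k) \<le> rlev (recs S ! r)"
    using assms(1) k(1) by (simp add: fifo_levels_def)
  with k(3) show False by simp
qed

lemma bfs_step_preserves_inv:
  assumes "bfs_step E S S'" "bfs_inv S"
  shows "bfs_inv S'"
  using assms
proof (induction rule: bfs_step.induct)
  case (pop S r q B)
  then obtain d where "fifo_levels (map rlev (recs S)) (r # q) d"
    by (auto simp: bfs_inv_def)
  moreover from this have "r < length (recs S)"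
    by (simp add: fifo_levels_def)
  ultimately show ?case
    using pop by (auto simp: bfs_inv_def dest: fifo_levels_pop)
next
  case (create S r W B v u t)
  then have "r < length (recs S)"
    and levels: "fifo_levels (map rlev (recs S)) (queue S) (rlev (recs S ! r))"
    by (simp_all add: bfs_inv_def)
  moreover have "(v, rlev (recs S ! r) + 1) \<notin> set (map (\<lambda>x. (rv x, rlev x)) (recs S))"
    using create.hyps(5) by (intro create_level_fresh[OF levels]) blast
  ultimately show ?case
    using create fifo_levels_enqueue[OF levels] by (simp add: bfs_inv_def nth_append)
next
  case (update S r W B v u t i)
  then have "r < length (recs S)"
    by (simp add: bfs_inv_def)
  then have "rlev ((recs S)[i := (recs S ! i)\<lparr>rtime := t, rpred := Some r\<rparr>] ! r) = rlev (recs S ! r)"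
    by (cases "i = r") simp_all
  with update show ?case
    by (simp add: bfs_inv_def map_update_time_pred)
qed (auto simp: bfs_inv_def)

lemma bfs_inv_reachable:
  assumes "(bfs_step E)\<^sup>*\<^sup>* (bfs_init s ts) S"
  shows "bfs_inv S"
  using assms
  by (induction rule: rtranclp_induct) (auto intro: bfs_inv_init bfs_step_preserves_inv)

text \<open>The invariant holds at every reachable state.\<close>

theorem lemma10:
  fixes V :: "'v set" and E :: "'v tedge set" and s :: 'v and ts :: real
    and S :: "'v bfs_state"
  assumes "finite V" and "finite E"
    and "\<forall>(u, v, t) \<in> E. u \<in> V \<and> v \<in> V \<and> u \<noteq> v"
    and "s \<in> V"
    and "(bfs_step E)\<^sup>*\<^sup>* (bfs_init s ts) S"
    and "queue S = []" and "cur S = None"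
    and "i < length (recs S)" and "j < length (recs S)" and "i \<noteq> j"
    and "rv (recs S ! i) = rv (recs S ! j)"
  shows "rlev (recs S ! i) \<noteq> rlev (recs S ! j)"
proof -
  have "distinct (map (\<lambda>x. (rv x, rlev x)) (recs S))"
    using bfs_inv_reachable[OF assms(5)] by (simp add: bfs_inv_def)
  then show ?thesis
    using assms(8-11) by (auto simp: distinct_conv_nth)
qed

end
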